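(* For all integers $b \geq k \geq 4$, $$R_{(b,k)} \leq \left(\frac{1}{\log b} + \frac{b^2}{(b^2-3b+2)\,\log \frac{b-2}{k-3}}\right)^{-1}.$$
   Context: For integers $b \geq k$ and $n$, a $(b,k)$-hash code of length $n$ is a subset $\mathcal{C} \subseteq \{1,2,\ldots,b\}^n$ such that for any $k$ distinct elements of $\mathcal{C}$ there is a coordinate $i \in \{1,\ldots,n\}$ in which their $i$-th entries are pairwise distinct. Let $N_{(b,k)}(n)$ denote the maximum size of a $(b,k)$-hash code of length $n$, and define $R_{(b,k)} = \limsup_{n\to\infty} \frac{1}{n}\log N_{(b,k)}(n)$. All logarithms are to base 2. *)

theory Defs
  imports "HOL-Analysis.Analysis"
begin

definition words :: "nat \<Rightarrow> nat \<Rightarrow> nat list set" where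
  "words b n = {xs. length xs = n \<and> set xs \<subseteq> {1..b}}"

definition is_hash_code :: "nat \<Rightarrow> nat \<Rightarrow> nat \<Rightarrow> nat list set \<Rightarrow> bool" where
  "is_hash_code b k n C \<longleftrightarrow> C \<subseteq> words b n \<and>
     (\<forall>S. S \<subseteq> C \<and> card S = k \<longrightarrow> (\<exists>i<n. inj_on (\<lambda>x. x ! i) S))"

definition N_hash :: "nat \<Rightarrow> nat \<Rightarrow> nat \<Rightarrow> nat" where
  "N_hash b k n = Max (card ` {C. is_hash_code b k n C})"

definition R_hash :: "nat \<Rightarrow> nat \<Rightarrow> ereal" where
  "R_hash b k = limsup (\<lambda>n. ereal (log 2 (real (N_hash b k n)) / real n))"

end

(* Fix a (b,k)-hash code C of length n and group its words by their prefix of length l, where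
   2 L b^l <= |C| < 2 L b^(l+1); then at least half of C lies in groups of size at least L.
   For x, y in one group, weigh every coordinate i with x_i ~= y_i by the number of codewords
   avoiding both x_i and y_i. Cauchy-Schwarz and an elementary quadratic inequality bound the
   average weight of a pair inside a group by (1 - 1/b)(1 - 2/b) |C|^2 per coordinate after the
   prefix, so some pair x ~= y has weight at most L/(L-1) (1 - 1/b)(1 - 2/b) (n - l) |C|.
   Around this pair any k - 2 further codewords must be separated by the b - 2 symbols other
   than x_i, y_i, and Hansel's counting argument together with Jensen's inequality gives
   log |C| <= log (k - 1) + (weight / |C|) log ((b - 2)/(k - 3)). As l ~ log_b |C|, this
   bounds log |C| linearly in n; let n tend to infinity, then L. *)

theory Submission
  imports Defs
begin

section \<open>Colour classes\<close>

(* kappa b = (1 - 1/b) (1 - 2/b) is the probability that three independent uniform symbols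
   x, y, u satisfy x \<noteq> y and u \<notin> {x, y}. *)
definition kappa :: "nat \<Rightarrow> real" where
  "kappa b = ((real b)^2 - 3 * real b + 2) / (real b)^2"

lemma kappa_pos:
  assumes "3 \<le> b" shows "0 < kappa b"
proof -
  have "0 < (real b - 1) * (real b - 2)" using assms by simp
  thus ?thesis unfolding kappa_def using assms
    by (intro divide_pos_pos) (simp_all add: algebra_simps power2_eq_square)
qed

lemma sum_sq_sum_cube_lower_bound:
  fixes F :: "'a \<Rightarrow> real"
  assumes "finite A" and b: "card A = b" "4 \<le> b"
    and F0: "\<And>a. a \<in> A \<Longrightarrow> 0 \<le> F a" and sF: "sum F A = m"
  shows "(3 * real b - 2) * m^3 / (real b)^2
           \<le> 3 * m * (\<Sum>a\<in>A. (F a)^2) - 2 * (\<Sum>a\<in>A. (F a)^3)"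
proof -
  define e where "e a = F a - m / b" for a
  have bp: "real b \<ge> 4" using b by simp
  have Fle: "F a \<le> m" if "a \<in> A" for a
    using member_le_sum[of a A F] F0 that sF \<open>finite A\<close> by simp
  have m0: "0 \<le> m" using sF F0 by (metis sum_nonneg)
  have pointwise: "3*m*(F a)^2 - 2*(F a)^3
      = e a^2 * (3*m - 6*m/b - 2*e a) + (3 * real b - 2) * m^3 / (real b)^3 + e a * (6*m^2/b - 6*m^2/b^2)" for a
    unfolding e_def using bp by (simp add: field_simps power2_eq_square power3_eq_cube)
  have "sum e A = 0" unfolding e_def using sF b by (simp add: sum_subtractf)
  hence "(\<Sum>a\<in>A. e a * (6*m^2/b - 6*m^2/b^2)) = 0" by (simp add: sum_distrib_right[symmetric])
  moreover have "0 \<le> e a^2 * (3*m - 6*m/b - 2*e a)" if "a \<in> A" for a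
  proof -
    have "m * 4 / real b \<le> m" using m0 bp by (simp add: field_simps mult_left_mono)
    thus ?thesis using Fle[OF that] unfolding e_def by (intro mult_nonneg_nonneg) (auto simp: field_simps)
  qed
  hence "0 \<le> (\<Sum>a\<in>A. e a^2 * (3*m - 6*m/b - 2*e a))" by (rule sum_nonneg)
  moreover have "3 * m * (\<Sum>a\<in>A. (F a)^2) - 2 * (\<Sum>a\<in>A. (F a)^3)
      = (\<Sum>a\<in>A. 3*m*(F a)^2 - 2*(F a)^3)"
    by (simp add: sum_subtractf sum_distrib_left)
  moreover have "(\<Sum>a\<in>A. 3*m*(F a)^2 - 2*(F a)^3)
      = (\<Sum>a\<in>A. e a^2 * (3*m - 6*m/b - 2*e a)) + real b * ((3 * real b - 2) * m^3 / (real b)^3)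
        + (\<Sum>a\<in>A. e a * (6*m^2/b - 6*m^2/b^2))"
    unfolding pointwise by (simp add: sum.distrib b)
  moreover have "real b * ((3 * real b - 2) * m^3 / (real b)^3) = (3 * real b - 2) * m^3 / (real b)^2"
    using bp by (simp add: power2_eq_square power3_eq_cube)
  ultimately show ?thesis by linarith
qed


lemma quadratic_colour_bound_balanced:
  fixes F Q :: "'a \<Rightarrow> real"
  assumes "finite A" and b: "card A = b" "4 \<le> b"
    and F0: "\<And>a. a \<in> A \<Longrightarrow> 0 \<le> F a" and sF: "sum F A = m" and m: "0 < m"
    and Qlo: "\<And>a. a \<in> A \<Longrightarrow> (F a)^2 \<le> m * Q a"
    and balanced: "\<And>a. a \<in> A \<Longrightarrow> 2 * F a \<le> m"
  shows "m^2 - 2 * (\<Sum>a\<in>A. (F a)^2) - (\<Sum>a\<in>A. Q a * (m - 2 * F a)) \<le> kappa b * m^2"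
proof -
  have bp: "real b \<ge> 4" using b by simp
  have "(F a)^2 * (m - 2 * F a) / m \<le> Q a * (m - 2 * F a)" if "a \<in> A" for a
  proof -
    have "(F a)^2 / m \<le> Q a" using Qlo[OF that] m by (simp add: field_simps)
    thus ?thesis using balanced[OF that] mult_right_mono by fastforce
  qed
  hence "(\<Sum>a\<in>A. (F a)^2 * (m - 2 * F a) / m) \<le> (\<Sum>a\<in>A. Q a * (m - 2 * F a))"
    by (rule sum_mono)
  moreover have "(\<Sum>a\<in>A. (F a)^2 * (m - 2 * F a) / m)
      = (m * (\<Sum>a\<in>A. (F a)^2) - 2 * (\<Sum>a\<in>A. (F a)^3)) / m"
    by (simp add: sum_divide_distrib[symmetric] sum_subtractf sum_distrib_left algebra_simps
        power2_eq_square power3_eq_cube)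
  ultimately have "m^2 - 2 * (\<Sum>a\<in>A. (F a)^2) - (\<Sum>a\<in>A. Q a * (m - 2 * F a))
      \<le> m^2 - 2 * (\<Sum>a\<in>A. (F a)^2) - (m * (\<Sum>a\<in>A. (F a)^2) - 2 * (\<Sum>a\<in>A. (F a)^3)) / m"
    by linarith
  also have "\<dots> = (m^3 - (3 * m * (\<Sum>a\<in>A. (F a)^2) - 2 * (\<Sum>a\<in>A. (F a)^3))) / m"
    using m by (simp add: field_simps power2_eq_square power3_eq_cube)
  also have "\<dots> \<le> (m^3 - (3 * real b - 2) * m^3 / (real b)^2) / m"
    using sum_sq_sum_cube_lower_bound[OF assms(1-3) F0 sF] m by (intro divide_right_mono) auto
  also have "\<dots> = kappa b * m^2"
    using m bp unfolding kappa_def by (simp add: field_simps power2_eq_square power3_eq_cube)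
  finally show ?thesis .
qed

text \<open>The left-hand side is concave in \<open>s\<close> and increasing on \<open>[0, m/2]\<close>.\<close>
lemma mult_sub_sq_div_le_kappa:
  fixes m s :: real
  assumes b: "4 \<le> b" and s: "0 \<le> s" "2 * s \<le> m"
  shows "m * s - 2 * s^2 / (real b - 1) \<le> kappa b * m^2"
proof -
  have bp: "real b \<ge> 4" using b by simp
  have "m * s - 2 * s^2 / (real b - 1)
      = m^2 * ((real b - 2) / (2 * (real b - 1))) - (m/2 - s) * (m - (2 * s + m) / (real b - 1))"
    using bp by (simp add: divide_simps power2_eq_square) (simp add: algebra_simps)
  moreover have "0 \<le> (m/2 - s) * (m - (2 * s + m) / (real b - 1))"
  proof -
    have "m * 4 \<le> m * real b" using s bp by (intro mult_left_mono) auto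
    hence "2 * s + m \<le> m * real b - m" using s by linarith
    hence "(2 * s + m) / (real b - 1) \<le> m" using bp by (simp add: pos_divide_le_eq right_diff_distrib)
    thus ?thesis using s by simp
  qed
  moreover have "m^2 * ((real b - 2) / (2 * (real b - 1))) \<le> m^2 * kappa b"
  proof (intro mult_left_mono)
    have "0 \<le> (real b - 2) * (real b * (real b - 4) + 2)" using bp by simp
    hence "(real b)^2 * (real b - 2) \<le> 2 * (real b - 1) * ((real b)^2 - 3 * real b + 2)"
      by (simp add: algebra_simps power2_eq_square)
    thus "(real b - 2) / (2 * (real b - 1)) \<le> kappa b"
      using bp unfolding kappa_def by (simp add: divide_simps ac_simps)
  qed simp
  ultimately show ?thesis by (simp add: mult.commute)
qed

lemma quadratic_colour_bound_dominant:
  fixes F Q :: "'a \<Rightarrow> real"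
  assumes "finite A" and b: "card A = b" "4 \<le> b"
    and F0: "\<And>a. a \<in> A \<Longrightarrow> 0 \<le> F a" and sF: "sum F A = m" and m: "0 < m"
    and Qlo: "\<And>a. a \<in> A \<Longrightarrow> (F a)^2 \<le> m * Q a" and Qhi: "\<And>a. a \<in> A \<Longrightarrow> Q a \<le> F a"
    and a0: "a0 \<in> A" "m < 2 * F a0"
  shows "m^2 - 2 * (\<Sum>a\<in>A. (F a)^2) - (\<Sum>a\<in>A. Q a * (m - 2 * F a)) \<le> kappa b * m^2"
proof -
  define rest where "rest = A - {a0}"
  define s where "s = sum F rest"
  have bp: "real b \<ge> 4" using b by simp
  have split: "sum h A = h a0 + sum h rest" for h :: "'a \<Rightarrow> real"
    unfolding rest_def using a0 \<open>finite A\<close> by (simp add: sum.remove)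
  have s: "s = m - F a0" using split[of F] sF unfolding s_def by simp
  have s0: "0 \<le> s" unfolding s_def rest_def using F0 by (intro sum_nonneg) auto
  have "0 \<le> Q a * (m - 2 * F a)" if "a \<in> rest" for a
  proof -
    have "F a \<le> s" unfolding s_def using that F0 \<open>finite A\<close> by (intro member_le_sum) (auto simp: rest_def)
    moreover have "0 \<le> m * Q a" using Qlo[of a] that zero_le_power2 order_trans unfolding rest_def by blast
    hence "0 \<le> Q a" using m by (simp add: zero_le_mult_iff)
    ultimately show ?thesis using s a0(2) by simp
  qed
  hence "0 \<le> (\<Sum>a\<in>rest. Q a * (m - 2 * F a))" by (rule sum_nonneg)
  moreover have "F a0 * (m - 2 * F a0) \<le> Q a0 * (m - 2 * F a0)"
    using Qhi[OF a0(1)] a0(2) by (intro mult_right_mono_neg) auto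
  ultimately have "m^2 - 2 * (\<Sum>a\<in>A. (F a)^2) - (\<Sum>a\<in>A. Q a * (m - 2 * F a))
      \<le> m^2 - 2 * (F a0)^2 - 2 * (\<Sum>a\<in>rest. (F a)^2) - F a0 * (m - 2 * F a0)"
    unfolding split[of "\<lambda>a. (F a)^2"] split[of "\<lambda>a. Q a * (m - 2 * F a)"] by argo
  also have "\<dots> = m * s - 2 * (\<Sum>a\<in>rest. (F a)^2)"
    unfolding s by (simp add: algebra_simps power2_eq_square)
  also have "\<dots> \<le> m * s - 2 * s^2 / (real b - 1)"
    using sum_squared_le_sum_of_squares[of F rest] a0 b bp
    unfolding s_def rest_def by (simp add: of_nat_diff field_simps)
  also have "\<dots> \<le> kappa b * m^2"
    using s s0 a0(2) b(2) by (intro mult_sub_sq_div_le_kappa) auto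
  finally show ?thesis .
qed

lemma quadratic_colour_bound:
  fixes F Q :: "'a \<Rightarrow> real"
  assumes "finite A" and "card A = b" "4 \<le> b"
    and "\<And>a. a \<in> A \<Longrightarrow> 0 \<le> F a" and "sum F A = m" and "0 < m"
    and "\<And>a. a \<in> A \<Longrightarrow> (F a)^2 \<le> m * Q a" and "\<And>a. a \<in> A \<Longrightarrow> Q a \<le> F a"
  shows "m^2 - 2 * (\<Sum>a\<in>A. (F a)^2) - (\<Sum>a\<in>A. Q a * (m - 2 * F a)) \<le> kappa b * m^2"
proof (cases "\<forall>a\<in>A. 2 * F a \<le> m")
  case True
  then show ?thesis using quadratic_colour_bound_balanced[OF assms(1-7)] by blast
next
  case False
  then obtain a0 where "a0 \<in> A" "m < 2 * F a0" by (auto simp: not_le)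
  then show ?thesis using quadratic_colour_bound_dominant[OF assms] by blast
qed

section \<open>Fibres of a map\<close>

definition fibre :: "('a \<Rightarrow> 'b) \<Rightarrow> 'a set \<Rightarrow> 'a \<Rightarrow> 'a set" where
  "fibre f S x = {y \<in> S. f y = f x}"

definition fibre_mean :: "('a \<Rightarrow> 'b) \<Rightarrow> 'a set \<Rightarrow> ('a \<Rightarrow> 'a \<Rightarrow> real) \<Rightarrow> 'a \<Rightarrow> real" where
  "fibre_mean f S W x = (\<Sum>y\<in>fibre f S x. W x y) / real (card (fibre f S x))"

definition avoiding_weight :: "('a \<Rightarrow> 'c) \<Rightarrow> 'a set \<Rightarrow> 'a \<Rightarrow> 'a \<Rightarrow> real" where
  "avoiding_weight col S x y =
     (if col x = col y then 0 else real (card {u \<in> S. col u \<noteq> col x \<and> col u \<noteq> col y}))"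

lemma fibre_subset: "fibre f S x \<subseteq> S"
  unfolding fibre_def by auto

lemma finite_fibre: "finite S \<Longrightarrow> finite (fibre f S x)"
  unfolding fibre_def by simp

lemma self_in_fibre: "x \<in> S \<Longrightarrow> x \<in> fibre f S x"
  unfolding fibre_def by simp

lemma fibre_eq: "y \<in> fibre f S x \<Longrightarrow> fibre f S y = fibre f S x"
  unfolding fibre_def by auto

lemma card_fibre_pos: "finite S \<Longrightarrow> x \<in> S \<Longrightarrow> 0 < card (fibre f S x)"
  using self_in_fibre finite_fibre by (metis card_gt_0_iff empty_iff)

lemma sum_fibre_average:
  fixes g :: "'a \<Rightarrow> real"
  assumes "finite S"
  shows "(\<Sum>x\<in>S. (\<Sum>y\<in>fibre f S x. g y) / real (card (fibre f S x))) = sum g S"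
proof -
  have "(\<Sum>x\<in>S. (\<Sum>y\<in>fibre f S x. g y) / real (card (fibre f S x)))
      = (\<Sum>x\<in>S. \<Sum>y\<in>{y\<in>S. f x = f y}. g y / real (card (fibre f S y)))"
    by (intro sum.cong refl) (auto simp: sum_divide_distrib fibre_eq fibre_def eq_commute)
  also have "\<dots> = (\<Sum>y\<in>S. \<Sum>x\<in>{x\<in>S. f x = f y}. g y / real (card (fibre f S y)))"
    using assms assms by (rule sum.swap_restrict)
  also have "\<dots> = sum g S"
  proof (intro sum.cong refl)
    fix y assume "y \<in> S"
    hence "0 < card (fibre f S y)" by (rule card_fibre_pos[OF assms])
    thus "(\<Sum>x\<in>{x\<in>S. f x = f y}. g y / real (card (fibre f S y))) = g y"
      by (simp add: fibre_def[symmetric])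
  qed
  finally show ?thesis .
qed

lemma sum_fibre_card_ratio_le:
  assumes "finite S" and "A \<subseteq> S"
  shows "(\<Sum>x\<in>A. real (card (fibre f S x)) / real (card (fibre f A x))) \<le> real (card S)"
proof -
  have finA: "finite A" using assms finite_subset by blast
  have "fibre f S x = {y\<in>S. f x = f y}" for x by (auto simp: fibre_def)
  hence "(\<Sum>x\<in>A. real (card (fibre f S x)) / real (card (fibre f A x)))
      = (\<Sum>x\<in>A. \<Sum>y\<in>{y\<in>S. f x = f y}. 1 / real (card (fibre f A x)))"
    by simp
  also have "\<dots> = (\<Sum>y\<in>S. \<Sum>x\<in>{x\<in>A. f x = f y}. 1 / real (card (fibre f A x)))"
    using finA assms(1) by (rule sum.swap_restrict)
  also have "\<dots> \<le> (\<Sum>y\<in>S. 1)"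
  proof (intro sum_mono)
    fix y
    define E where "E = {x\<in>A. f x = f y}"
    have "fibre f A x = E" if "x \<in> E" for x using that unfolding E_def fibre_def by auto
    hence "(\<Sum>x\<in>E. 1 / real (card (fibre f A x))) = (\<Sum>x\<in>E. 1 / real (card E))" by simp
    also have "\<dots> \<le> 1" by (cases "card E = 0") auto
    finally show "(\<Sum>x\<in>{x\<in>A. f x = f y}. 1 / real (card (fibre f A x))) \<le> 1" unfolding E_def .
  qed
  finally show ?thesis by simp
qed

text \<open>Cauchy--Schwarz combined with \<open>sum_fibre_card_ratio_le\<close>.\<close>
lemma sq_card_le_sum_fibre_card_ratio:
  assumes "finite S" and "A \<subseteq> S"
  shows "(real (card A))^2 \<le> real (card S) * (\<Sum>x\<in>A. real (card (fibre f A x)) / real (card (fibre f S x)))"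
proof -
  define d where "d x = real (card (fibre f S x))" for x
  define n where "n x = real (card (fibre f A x))" for x
  have finA: "finite A" using assms finite_subset by blast
  have pos: "0 < d x" "0 < n x" if "x \<in> A" for x
    using card_fibre_pos[OF assms(1)] card_fibre_pos[OF finA that] that assms(2)
    unfolding d_def n_def by auto
  have "sqrt (n x / d x) * sqrt (d x / n x) = 1" if "x \<in> A" for x
    using pos[OF that] by (simp add: real_sqrt_mult[symmetric])
  hence "(real (card A))^2 = (\<Sum>x\<in>A. sqrt (n x / d x) * sqrt (d x / n x))^2"
    by simp
  also have "\<dots> \<le> (\<Sum>x\<in>A. (sqrt (n x / d x))^2) * (\<Sum>x\<in>A. (sqrt (d x / n x))^2)"
    by (rule Cauchy_Schwarz_ineq_sum)
  also have "\<dots> = (\<Sum>x\<in>A. n x / d x) * (\<Sum>x\<in>A. d x / n x)"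
    using pos by (intro arg_cong2[where f="(*)"] sum.cong) (auto simp: less_imp_le)
  also have "\<dots> \<le> (\<Sum>x\<in>A. n x / d x) * real (card S)"
    using pos sum_fibre_card_ratio_le[OF assms, of f] unfolding d_def n_def
    by (intro mult_left_mono sum_nonneg) (auto simp: less_imp_le)
  finally show ?thesis unfolding n_def d_def by (simp add: mult.commute)
qed

lemma sum_fibre_card_ratio_le_card:
  assumes "finite S" and "A \<subseteq> S"
  shows "(\<Sum>x\<in>A. real (card (fibre f A x)) / real (card (fibre f S x))) \<le> real (card A)"
proof -
  have "real (card (fibre f A x)) / real (card (fibre f S x)) \<le> 1" if "x \<in> A" for x
  proof -
    have "card (fibre f A x) \<le> card (fibre f S x)"
      using assms by (intro card_mono finite_fibre) (auto simp: fibre_def)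
    moreover have "0 < card (fibre f S x)" using card_fibre_pos[OF assms(1)] that assms(2) by auto
    ultimately show ?thesis by simp
  qed
  hence "(\<Sum>x\<in>A. real (card (fibre f A x)) / real (card (fibre f S x))) \<le> (\<Sum>x\<in>A. 1)"
    by (rule sum_mono)
  thus ?thesis by simp
qed

lemma avoiding_weight_eq:
  assumes "finite S"
  shows "avoiding_weight col S x y = real (card S) - real (card {u\<in>S. col u = col x})
    - real (card {u\<in>S. col u = col y})
    - (if col y = col x then real (card S) - 2 * real (card {u\<in>S. col u = col x}) else 0)"
proof (cases "col y = col x")
  case False
  let ?X = "{u\<in>S. col u \<noteq> col x \<and> col u \<noteq> col y}"
    and ?Y = "{u\<in>S. col u = col x}" and ?Z = "{u\<in>S. col u = col y}"
  have "card S = card (?X \<union> ?Y \<union> ?Z)" by (rule arg_cong[where f=card]) auto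
  also have "\<dots> = card (?X \<union> ?Y) + card ?Z" using assms False by (intro card_Un_disjoint) auto
  also have "card (?X \<union> ?Y) = card ?X + card ?Y" using assms by (intro card_Un_disjoint) auto
  finally show ?thesis using False unfolding avoiding_weight_def by simp
qed (simp add: avoiding_weight_def)

lemma fibre_mean_avoiding_weight_eq:
  fixes col :: "'a \<Rightarrow> 'c" and key :: "'a \<Rightarrow> 'k"
  assumes S: "finite S" and x: "x \<in> S"
  defines "F \<equiv> \<lambda>c. real (card {u\<in>S. col u = c})" and "d \<equiv> real (card (fibre key S x))"
  shows "fibre_mean key S (avoiding_weight col S) x
           = real (card S) - F (col x) - (\<Sum>y\<in>fibre key S x. F (col y)) / d
             - real (card (fibre key {u\<in>S. col u = col x} x)) * (real (card S) - 2 * F (col x)) / d"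
proof -
  define m where "m = real (card S)"
  define n where "n = real (card (fibre key {u\<in>S. col u = col x} x))"
  have "{y\<in>fibre key S x. col y = col x} = fibre key {u\<in>S. col u = col x} x"
    unfolding fibre_def by auto
  hence "(\<Sum>y\<in>fibre key S x. if col y = col x then m - 2 * F (col x) else 0) = n * (m - 2 * F (col x))"
    using sum.inter_filter[OF finite_fibre[OF S, of key x], of "\<lambda>_. m - 2 * F (col x)" "\<lambda>y. col y = col x"]
    by (simp add: n_def)
  moreover have "(\<Sum>y\<in>fibre key S x. avoiding_weight col S x y)
      = (\<Sum>y\<in>fibre key S x. (m - F (col x)) - F (col y)
          - (if col y = col x then m - 2 * F (col x) else 0))"
    unfolding avoiding_weight_eq[OF S] m_def F_def by simp
  ultimately have "(\<Sum>y\<in>fibre key S x. avoiding_weight col S x y)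
      = d * (m - F (col x)) - (\<Sum>y\<in>fibre key S x. F (col y)) - n * (m - 2 * F (col x))"
    unfolding d_def by (simp only: sum_subtractf sum_constant) (simp add: right_diff_distrib)
  moreover have "0 < d" unfolding d_def using card_fibre_pos[OF S x] by simp
  ultimately show ?thesis
    unfolding fibre_mean_def d_def[symmetric] m_def[symmetric] n_def[symmetric]
    by (simp add: diff_divide_distrib)
qed

text \<open>By inclusion-exclusion the sum becomes the left-hand side of the quadratic colour bound
  for the colour class sizes \<open>F\<close> and the weights \<open>Q\<close>; the hypothesis \<open>F c ^ 2 \<le> m * Q c\<close> is
  Cauchy--Schwarz.\<close>
lemma sum_fibre_mean_avoiding_weight_le:
  fixes col :: "'a \<Rightarrow> 'c" and key :: "'a \<Rightarrow> 'k"
  assumes S: "finite S" and A: "finite A" "card A = b" "4 \<le> b" and col: "col ` S \<subseteq> A"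
  shows "(\<Sum>x\<in>S. fibre_mean key S (avoiding_weight col S) x) \<le> kappa b * (real (card S))^2"
proof (cases "S = {}")
  case False
  define m where "m = real (card S)"
  define cls where "cls c = {u\<in>S. col u = c}" for c
  define F where "F c = real (card (cls c))" for c
  define d where "d x = real (card (fibre key S x))" for x
  define n where "n x = real (card (fibre key (cls (col x)) x))" for x
  define Q where "Q c = (\<Sum>x\<in>cls c. n x / d x)" for c
  have m: "0 < m" unfolding m_def using S False by (simp add: card_gt_0_iff)
  have group: "(\<Sum>x\<in>S. h x) = (\<Sum>c\<in>A. \<Sum>x\<in>cls c. h x)" for h :: "'a \<Rightarrow> real"
    unfolding cls_def using sum.group[OF S A(1) col, of h] by simp
  have mean: "fibre_mean key S (avoiding_weight col S) x
      = m - F (col x) - (\<Sum>y\<in>fibre key S x. F (col y)) / d x - n x * (m - 2 * F (col x)) / d x"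
    if "x \<in> S" for x
    unfolding F_def d_def n_def cls_def m_def by (rule fibre_mean_avoiding_weight_eq[OF S that])
  have "(\<Sum>x\<in>S. fibre_mean key S (avoiding_weight col S) x)
      = m * m - (\<Sum>x\<in>S. F (col x)) - (\<Sum>x\<in>S. (\<Sum>y\<in>fibre key S x. F (col y)) / d x)
        - (\<Sum>x\<in>S. n x * (m - 2 * F (col x)) / d x)"
    by (simp add: mean sum_subtractf m_def)
  also have "(\<Sum>x\<in>S. (\<Sum>y\<in>fibre key S x. F (col y)) / d x) = (\<Sum>x\<in>S. F (col x))"
    unfolding d_def by (rule sum_fibre_average[OF S])
  also have "(\<Sum>x\<in>S. F (col x)) = (\<Sum>c\<in>A. (F c)^2)"
    unfolding group by (simp add: F_def cls_def power2_eq_square)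
  also have "(\<Sum>x\<in>S. n x * (m - 2 * F (col x)) / d x) = (\<Sum>c\<in>A. Q c * (m - 2 * F c))"
    unfolding group Q_def by (simp add: sum_distrib_right cls_def)
  also have "m * m - (\<Sum>c\<in>A. (F c)^2) - (\<Sum>c\<in>A. (F c)^2) - (\<Sum>c\<in>A. Q c * (m - 2 * F c))
      \<le> kappa b * m^2"
  proof -
    have "m^2 - 2 * (\<Sum>c\<in>A. (F c)^2) - (\<Sum>c\<in>A. Q c * (m - 2 * F c)) \<le> kappa b * m^2"
    proof (rule quadratic_colour_bound[OF A _ _ m])
      show "sum F A = m" using group[of "\<lambda>_. 1"] by (simp add: F_def m_def)
      fix c assume "c \<in> A"
      have "cls c \<subseteq> S" unfolding cls_def by auto
      show "(F c)^2 \<le> m * Q c"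
        using sq_card_le_sum_fibre_card_ratio[OF S \<open>cls c \<subseteq> S\<close>, of key]
        unfolding F_def m_def Q_def n_def d_def by (simp add: cls_def)
      show "Q c \<le> F c"
        using sum_fibre_card_ratio_le_card[OF S \<open>cls c \<subseteq> S\<close>, of key]
        unfolding F_def Q_def n_def d_def by (simp add: cls_def)
    qed (simp add: F_def)
    thus ?thesis by (simp add: power2_eq_square)
  qed
  finally show ?thesis by (simp add: m_def)
qed (simp add: fibre_mean_def)

lemma fibre_mean_sum:
  "fibre_mean f S (\<lambda>x y. \<Sum>i\<in>I. W i x y) x = (\<Sum>i\<in>I. fibre_mean f S (W i) x)"
  unfolding fibre_mean_def by (simp add: sum.swap[of _ I] sum_divide_distrib)

lemma obtain_close_pair_in_fibre:
  fixes W :: "'a \<Rightarrow> 'a \<Rightarrow> real"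
  assumes S: "finite S" "S \<noteq> {}" and L: "2 \<le> L" and large: "\<And>x. x \<in> S \<Longrightarrow> L \<le> card (fibre f S x)"
    and diag: "\<And>x. W x x = 0" and T: "(\<Sum>x\<in>S. fibre_mean f S W x) \<le> T" "0 \<le> T"
  obtains x y where "x \<in> S" "y \<in> fibre f S x" "x \<noteq> y"
    "W x y \<le> real L / (real L - 1) * T / real (card S)"
proof (rule ccontr)
  define B where "B = real L / (real L - 1) * T / real (card S)"
  assume "\<not> thesis"
  with that have far: "B < W x y" if "x \<in> S" "y \<in> fibre f S x" "x \<noteq> y" for x y
    using that unfolding B_def by force
  have cardS: "0 < real (card S)" using S by (simp add: card_gt_0_iff)
  have B: "0 \<le> B" unfolding B_def using L T(2) by simp
  have "(real L - 1) / real L * B < fibre_mean f S W x" if x: "x \<in> S" for x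
  proof -
    define D where "D = fibre f S x"
    have D: "finite D" "x \<in> D" "real L \<le> real (card D)"
      unfolding D_def using finite_fibre[OF S(1)] self_in_fibre[OF x] large[OF x] by auto
    have "D - {x} \<noteq> {}"
    proof
      assume "D - {x} = {}"
      hence "card D \<le> 1" using card_mono[of "{x}" D] by auto
      thus False using D(3) L by simp
    qed
    hence "(\<Sum>y\<in>D - {x}. B) < (\<Sum>y\<in>D - {x}. W x y)"
      using D far x unfolding D_def by (intro sum_strict_mono) auto
    also have "\<dots> = (\<Sum>y\<in>D. W x y)" using D diag[of x] by (simp add: sum.remove)
    finally have "(real (card D) - 1) * B < (\<Sum>y\<in>D. W x y)"
      using D L by (simp add: card_Diff_singleton of_nat_diff)
    hence "(real (card D) - 1) * B / real (card D) < (\<Sum>y\<in>D. W x y) / real (card D)"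
      using D(3) L by (intro divide_strict_right_mono) auto
    moreover have "(real L - 1) / real L * B \<le> (real (card D) - 1) / real (card D) * B"
      using D(3) L B by (intro mult_right_mono) (auto simp: field_simps)
    ultimately show ?thesis unfolding fibre_mean_def D_def[symmetric] by simp
  qed
  hence "(\<Sum>x\<in>S. (real L - 1) / real L * B) < (\<Sum>x\<in>S. fibre_mean f S W x)"
    using S by (intro sum_strict_mono) auto
  moreover have "(\<Sum>x\<in>S. (real L - 1) / real L * B) = T"
    unfolding B_def using L cardS by (simp add: field_simps)
  ultimately show False using T(1) by simp
qed

section \<open>Words and prefix classes\<close>

definition sep_weight :: "nat \<Rightarrow> nat list set \<Rightarrow> nat list \<Rightarrow> nat list \<Rightarrow> real" where
  "sep_weight n S x y = (\<Sum>i<n. avoiding_weight (\<lambda>u. u ! i) S x y)"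

lemma sep_weight_self [simp]: "sep_weight n S x x = 0"
  by (simp add: sep_weight_def avoiding_weight_def)

lemma finite_words: "finite (words b n)"
proof -
  have "words b n = {xs. set xs \<subseteq> {1..b} \<and> length xs = n}" unfolding words_def by auto
  thus ?thesis using finite_lists_length_eq[of "{1..b}" n] by simp
qed

lemma card_words: "card (words b n) = b ^ n"
proof -
  have "words b n = {xs. set xs \<subseteq> {1..b} \<and> length xs = n}" unfolding words_def by auto
  thus ?thesis using card_lists_length_eq[of "{1..b}" n] by simp
qed

lemma words_nth: "u \<in> words b n \<Longrightarrow> i < n \<Longrightarrow> u ! i \<in> {1..b}"
  unfolding words_def by (auto dest: nth_mem)

lemma take_in_words: "u \<in> words b n \<Longrightarrow> l \<le> n \<Longrightarrow> take l u \<in> words b l"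
  unfolding words_def by (auto dest: in_set_takeD)

lemma sum_fibre_mean_sep_weight_le:
  assumes S: "S \<subseteq> words b n" and b: "4 \<le> b" and l: "l \<le> n"
  shows "(\<Sum>x\<in>S. fibre_mean (take l) S (sep_weight n S) x)
           \<le> (real n - real l) * kappa b * (real (card S))^2"
proof -
  have finS: "finite S" using S finite_words by (rule finite_subset)
  have "(\<Sum>x\<in>S. fibre_mean (take l) S (sep_weight n S) x)
      = (\<Sum>i<n. \<Sum>x\<in>S. fibre_mean (take l) S (avoiding_weight (\<lambda>u. u ! i) S) x)"
    unfolding sep_weight_def fibre_mean_sum by (rule sum.swap)
  also have "\<dots> \<le> (\<Sum>i<n. if i < l then 0 else kappa b * (real (card S))^2)"
  proof (intro sum_mono)
    fix i assume i: "i \<in> {..<n}"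
    show "(\<Sum>x\<in>S. fibre_mean (take l) S (avoiding_weight (\<lambda>u. u ! i) S) x)
        \<le> (if i < l then 0 else kappa b * (real (card S))^2)"
    proof (cases "i < l")
      case True
      have "avoiding_weight (\<lambda>u. u ! i) S x y = 0" if "y \<in> fibre (take l) S x" for x y
      proof -
        have "take l y ! i = take l x ! i" using that unfolding fibre_def by auto
        thus ?thesis using True by (simp add: avoiding_weight_def)
      qed
      thus ?thesis using True by (simp add: fibre_mean_def)
    next
      case False
      have "(\<lambda>u. u ! i) ` S \<subseteq> {1..b}" using S i words_nth by blast
      from sum_fibre_mean_avoiding_weight_le[OF finS _ _ b this] False show ?thesis by simp
    qed
  qed
  also have "\<dots> = (\<Sum>i\<in>{l..<n}. kappa b * (real (card S))^2)"
    by (rule sum.mono_neutral_cong_right) auto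
  also have "\<dots> = (real n - real l) * kappa b * (real (card S))^2"
    using l by (simp add: of_nat_diff)
  finally show ?thesis .
qed

section \<open>Hansel's counting argument\<close>

lemma card_subsets_containing:
  assumes "finite A" and "c \<in> A" and "1 \<le> t"
  shows "card {s. s \<subseteq> A \<and> card s = t \<and> c \<in> s} = (card A - 1) choose (t - 1)"
proof -
  have eq: "{s. s \<subseteq> A \<and> card s = t \<and> c \<in> s} = insert c ` {s. s \<subseteq> A - {c} \<and> card s = t - 1}"
  proof (intro equalityI subsetI)
    fix s assume s: "s \<in> {s. s \<subseteq> A \<and> card s = t \<and> c \<in> s}"
    hence "finite s" using assms(1) finite_subset by auto
    hence "s - {c} \<in> {s. s \<subseteq> A - {c} \<and> card s = t - 1}" using s by auto
    moreover have "s = insert c (s - {c})" using s by auto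
    ultimately show "s \<in> insert c ` {s. s \<subseteq> A - {c} \<and> card s = t - 1}" by blast
  next
    fix s assume "s \<in> insert c ` {s. s \<subseteq> A - {c} \<and> card s = t - 1}"
    then obtain s0 where s0: "s0 \<subseteq> A - {c}" "card s0 = t - 1" "s = insert c s0" by auto
    have "finite s0" "c \<notin> s0" using s0 assms(1) finite_subset by auto
    hence "card s = t" using s0 assms(3) by simp
    thus "s \<in> {s. s \<subseteq> A \<and> card s = t \<and> c \<in> s}" using s0 assms(2) by auto
  qed
  have "inj_on (insert c) {s. s \<subseteq> A - {c} \<and> card s = t - 1}"
    by (intro inj_onI) (metis Diff_insert_absorb insert_subset subset_Diff_insert mem_Collect_eq)
  hence "card {s. s \<subseteq> A \<and> card s = t \<and> c \<in> s} = card {s. s \<subseteq> A - {c} \<and> card s = t - 1}"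
    unfolding eq by (rule card_image)
  also have "\<dots> = card (A - {c}) choose (t - 1)" using assms(1) by (intro n_subsets) auto
  finally show ?thesis using assms(1,2) by simp
qed

lemma card_PiE_subsets_covering:
  fixes v :: "'i \<Rightarrow> 'c"
  assumes I: "finite I" and Col: "\<And>i. i \<in> I \<Longrightarrow> finite (Col i) \<and> card (Col i) = c"
    and t: "1 \<le> t" "t \<le> c"
  shows "real (card {S \<in> PiE I (\<lambda>i. {s. s \<subseteq> Col i \<and> card s = t}). \<forall>i\<in>I. v i \<in> Col i \<longrightarrow> v i \<in> S i})
           = real (c choose t) ^ card I * (real t / real c) ^ card {i\<in>I. v i \<in> Col i}"
proof -
  define Om where "Om i = {s. s \<subseteq> Col i \<and> card s = t}" for i
  define Cov where "Cov i = (if v i \<in> Col i then {s\<in>Om i. v i \<in> s} else Om i)" for i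
  have "{S \<in> PiE I Om. \<forall>i\<in>I. v i \<in> Col i \<longrightarrow> v i \<in> S i} = PiE I Cov"
    unfolding Cov_def by (intro set_eqI) (auto simp: PiE_iff split: if_splits)
  hence "card {S \<in> PiE I Om. \<forall>i\<in>I. v i \<in> Col i \<longrightarrow> v i \<in> S i} = (\<Prod>i\<in>I. card (Cov i))"
    using I by (simp add: card_PiE)
  also have "real \<dots> = (\<Prod>i\<in>I. real (c choose t) * (if v i \<in> Col i then real t / real c else 1))"
    unfolding of_nat_prod
  proof (intro prod.cong refl)
    fix i assume i: "i \<in> I"
    have "real c * real (c - 1 choose (t - 1)) = real (c choose t) * real t"
      using Suc_times_binomial_eq[of "c - 1" "t - 1"] t by (simp flip: of_nat_mult)
    moreover have "{s\<in>Om i. v i \<in> s} = {s. s \<subseteq> Col i \<and> card s = t \<and> v i \<in> s}"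
      unfolding Om_def by auto
    moreover have "card (Om i) = c choose t" unfolding Om_def using Col[OF i] by (simp add: n_subsets)
    ultimately show "real (card (Cov i)) = real (c choose t) * (if v i \<in> Col i then real t / real c else 1)"
      using card_subsets_containing[of "Col i" "v i" t] Col[OF i] t unfolding Cov_def
      by (auto simp: field_simps)
  qed
  also have "\<dots> = real (c choose t) ^ card I * (real t / real c) ^ card {i\<in>I. v i \<in> Col i}"
    using I by (simp add: prod.distrib prod.If_cases Int_def)
  finally show ?thesis unfolding Om_def .
qed

text \<open>\<open>t + 1\<close> covered points outside \<open>Z\<close> would need \<open>t + 1\<close> distinct values in \<open>S i\<close> at a
  coordinate \<open>i\<close> separating them.\<close>
lemma card_covered_le:
  fixes val :: "'a \<Rightarrow> 'i \<Rightarrow> 'c"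
  assumes V: "finite V" and Z: "finite Z" and S: "\<And>i. i \<in> I \<Longrightarrow> finite (S i) \<and> card (S i) = t"
    and sep: "\<And>T. T \<subseteq> V - Z \<Longrightarrow> card T = t + 1 \<Longrightarrow>
                \<exists>i\<in>I. (\<forall>u\<in>T. val u i \<in> Col i) \<and> inj_on (\<lambda>u. val u i) T"
  shows "card {u\<in>V. \<forall>i\<in>I. val u i \<in> Col i \<longrightarrow> val u i \<in> S i} \<le> t + card Z"
proof -
  define W where "W = {u\<in>V. \<forall>i\<in>I. val u i \<in> Col i \<longrightarrow> val u i \<in> S i}"
  have "card (W - Z) \<le> t"
  proof (rule ccontr)
    assume "\<not> card (W - Z) \<le> t"
    hence "t + 1 \<le> card (W - Z)" by simp
    then obtain T where T: "T \<subseteq> W - Z" "card T = t + 1"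
      by (rule obtain_subset_with_card_n)
    then obtain i where i: "i \<in> I" "\<forall>u\<in>T. val u i \<in> Col i" "inj_on (\<lambda>u. val u i) T"
      using sep[of T] unfolding W_def by blast
    have "(\<lambda>u. val u i) ` T \<subseteq> S i" using T i unfolding W_def by auto
    hence "card ((\<lambda>u. val u i) ` T) \<le> t" using S[OF i(1)] card_mono by metis
    thus False using card_image[OF i(3)] T(2) by simp
  qed
  moreover have "card W \<le> card (W - Z \<union> Z)"
    using V Z unfolding W_def by (intro card_mono) auto
  moreover have "card (W - Z \<union> Z) \<le> card (W - Z) + card Z" by (rule card_Un_le)
  ultimately show ?thesis unfolding W_def by simp
qed

text \<open>Average the previous bound over all choices of \<open>t\<close>-subsets \<open>S i \<subseteq> Col i\<close>; the covering
  count above says how often each point is covered.\<close>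
lemma hansel_weighted_count:
  fixes val :: "'a \<Rightarrow> 'i \<Rightarrow> 'c"
  assumes V: "finite V" and Z: "finite Z" and I: "finite I"
    and Col: "\<And>i. i \<in> I \<Longrightarrow> finite (Col i) \<and> card (Col i) = c"
    and t: "1 \<le> t" "t \<le> c"
    and sep: "\<And>T. T \<subseteq> V - Z \<Longrightarrow> card T = t + 1 \<Longrightarrow>
                \<exists>i\<in>I. (\<forall>u\<in>T. val u i \<in> Col i) \<and> inj_on (\<lambda>u. val u i) T"
  shows "(\<Sum>u\<in>V. (real t / real c) ^ card {i\<in>I. val u i \<in> Col i}) \<le> real t + real (card Z)"
proof -
  define Omega where "Omega = PiE I (\<lambda>i. {s. s \<subseteq> Col i \<and> card s = t})"
  define covers where "covers S u \<longleftrightarrow> (\<forall>i\<in>I. val u i \<in> Col i \<longrightarrow> val u i \<in> S i)" for S u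
  define N where "N = real (c choose t) ^ card I"
  have N: "0 < N" unfolding N_def using t by simp
  have finOmega: "finite Omega" unfolding Omega_def using I Col by (intro finite_PiE) auto
  have cardOmega: "real (card Omega) = N"
    unfolding Omega_def N_def using I Col by (simp add: card_PiE n_subsets)
  have few_covered: "real (card {u\<in>V. covers S u}) \<le> real t + real (card Z)" if S: "S \<in> Omega" for S
  proof -
    have size: "finite (S i) \<and> card (S i) = t" if "i \<in> I" for i
    proof -
      have "S i \<subseteq> Col i" "card (S i) = t" using PiE_mem[OF S[unfolded Omega_def] that] by auto
      thus ?thesis using Col[OF that] finite_subset by auto
    qed
    have "card {u\<in>V. covers S u} \<le> t + card Z"
      unfolding covers_def by (rule card_covered_le[OF V Z size sep])
    thus ?thesis by (metis of_nat_add of_nat_le_iff)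
  qed
  have "(\<Sum>u\<in>V. N * (real t / real c) ^ card {i\<in>I. val u i \<in> Col i})
      = (\<Sum>u\<in>V. real (card {S\<in>Omega. covers S u}))"
    using card_PiE_subsets_covering[OF I Col t] unfolding Omega_def N_def covers_def by simp
  also have "\<dots> = (\<Sum>S\<in>Omega. real (card {u\<in>V. covers S u}))"
    using sum.swap_restrict[OF V finOmega, of "\<lambda>_ _. 1 :: real" "\<lambda>u S. covers S u"] by simp
  also have "\<dots> \<le> N * (real t + real (card Z))"
    using sum_bounded_above[of Omega, OF few_covered] cardOmega by (simp add: mult.commute)
  finally show ?thesis using N by (simp add: sum_distrib_left[symmetric] mult_le_cancel_left_pos)
qed

lemma ln_card_le_of_sum_power_le:
  fixes e :: "'a \<Rightarrow> nat"
  assumes V: "finite V" "V \<noteq> {}" and r: "0 < r" and K: "(\<Sum>u\<in>V. r ^ e u) \<le> K"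
  shows "ln (real (card V)) \<le> ln K - (\<Sum>u\<in>V. real (e u)) / real (card V) * ln r"
proof -
  define n where "n = real (card V)"
  have n: "0 < n" unfolding n_def using V by (simp add: card_gt_0_iff)
  have "exp ((\<Sum>u\<in>V. real (e u)) / n * ln r) = exp (\<Sum>u\<in>V. (1 / n) *\<^sub>R (real (e u) * ln r))"
    by (simp add: sum_distrib_left sum_divide_distrib[symmetric] sum_distrib_right mult.commute)
  also have "\<dots> \<le> (\<Sum>u\<in>V. (1 / n) * exp (real (e u) * ln r))"
    using n by (intro convex_on_sum[OF V exp_convex]) (auto simp: n_def)
  also have "\<dots> = (\<Sum>u\<in>V. r ^ e u) / n"
    using r by (simp add: exp_of_nat_mult sum_divide_distrib)
  also have "\<dots> \<le> K / n" using K n by (simp add: divide_right_mono)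
  finally have ex: "exp ((\<Sum>u\<in>V. real (e u)) / n * ln r) \<le> K / n" .
  moreover have "0 < K / n" using ex exp_gt_zero order_less_le_trans by metis
  ultimately have "(\<Sum>u\<in>V. real (e u)) / n * ln r \<le> ln (K / n)"
    by (subst ln_ge_iff) auto
  also have "ln (K / n) = ln K - ln n"
    using \<open>0 < K / n\<close> n by (simp add: ln_div zero_less_divide_iff)
  finally show ?thesis unfolding n_def by simp
qed

section \<open>Hash codes\<close>

lemma sep_weight_eq_sum_card:
  assumes "finite S"
  shows "sep_weight n S x y
           = (\<Sum>u\<in>S. real (card {i. i < n \<and> x ! i \<noteq> y ! i \<and> u ! i \<noteq> x ! i \<and> u ! i \<noteq> y ! i}))"
proof -
  have "avoiding_weight (\<lambda>u. u ! i) S x y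
      = (\<Sum>u\<in>S. if x ! i \<noteq> y ! i \<and> u ! i \<noteq> x ! i \<and> u ! i \<noteq> y ! i then 1 else 0)" for i
    using assms by (cases "x ! i = y ! i") (simp_all add: avoiding_weight_def sum.If_cases Int_def)
  hence "sep_weight n S x y = (\<Sum>i<n. \<Sum>u\<in>S. if x ! i \<noteq> y ! i \<and> u ! i \<noteq> x ! i \<and> u ! i \<noteq> y ! i then 1 else 0)"
    unfolding sep_weight_def by simp
  also have "\<dots> = (\<Sum>u\<in>S. \<Sum>i<n. if x ! i \<noteq> y ! i \<and> u ! i \<noteq> x ! i \<and> u ! i \<noteq> y ! i then 1 else 0)"
    by (rule sum.swap)
  also have "\<dots> = (\<Sum>u\<in>S. real (card {i. i < n \<and> x ! i \<noteq> y ! i \<and> u ! i \<noteq> x ! i \<and> u ! i \<noteq> y ! i}))"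
  proof (intro sum.cong refl)
    fix u
    have "{i. i < n \<and> x ! i \<noteq> y ! i \<and> u ! i \<noteq> x ! i \<and> u ! i \<noteq> y ! i}
        = {i\<in>{..<n}. x ! i \<noteq> y ! i \<and> u ! i \<noteq> x ! i \<and> u ! i \<noteq> y ! i}" by auto
    thus "(\<Sum>i<n. if x ! i \<noteq> y ! i \<and> u ! i \<noteq> x ! i \<and> u ! i \<noteq> y ! i then 1 else 0)
        = real (card {i. i < n \<and> x ! i \<noteq> y ! i \<and> u ! i \<noteq> x ! i \<and> u ! i \<noteq> y ! i})"
      by (simp add: sum.inter_filter[symmetric])
  qed
  finally show ?thesis .
qed

lemma hash_code_subset_words: "is_hash_code b k n C \<Longrightarrow> C \<subseteq> words b n"
  by (simp add: is_hash_code_def)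

lemma hash_code_separates_k_set:
  "is_hash_code b k n C \<Longrightarrow> K \<subseteq> C \<Longrightarrow> card K = k \<Longrightarrow> \<exists>i<n. inj_on (\<lambda>u. u ! i) K"
  unfolding is_hash_code_def by blast

lemma hash_code_separates:
  assumes hc: "is_hash_code b k n C" and k: "2 \<le> k" and S: "S \<subseteq> C"
    and xy: "x \<in> S" "y \<in> S" "x \<noteq> y" and T: "T \<subseteq> S - {x, y}" "card T = k - 2"
  shows "\<exists>i\<in>{i. i < n \<and> x ! i \<noteq> y ! i}.
           (\<forall>u\<in>T. u ! i \<in> {1..b} - {x ! i, y ! i}) \<and> inj_on (\<lambda>u. u ! i) T"
proof -
  have CW: "C \<subseteq> words b n" using hc by (rule hash_code_subset_words)
  have "T \<subseteq> C" using T S by blast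
  hence finT: "finite T" using finite_subset[OF CW finite_words] by (rule finite_subset)
  have "x \<notin> insert y T" "y \<notin> T" using T xy(3) by auto
  hence "card (insert x (insert y T)) = k" using T(2) finT k by simp
  moreover have "insert x (insert y T) \<subseteq> C" using T xy S by auto
  ultimately obtain i where i: "i < n" "inj_on (\<lambda>u. u ! i) (insert x (insert y T))"
    using hash_code_separates_k_set[OF hc] by blast
  show ?thesis
  proof (intro bexI conjI ballI)
    show "i \<in> {i. i < n \<and> x ! i \<noteq> y ! i}" using inj_onD[OF i(2), of x y] xy(3) i(1) by auto
    show "inj_on (\<lambda>u. u ! i) T" using i(2) by (rule inj_on_subset) auto
    fix u assume u: "u \<in> T"
    have "u ! i \<in> {1..b}" using words_nth[OF _ i(1)] u \<open>T \<subseteq> C\<close> CW by blast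
    moreover have "u ! i \<noteq> x ! i" "u ! i \<noteq> y ! i"
      using u T inj_onD[OF i(2), of u x] inj_onD[OF i(2), of u y] by auto
    ultimately show "u ! i \<in> {1..b} - {x ! i, y ! i}" by simp
  qed
qed

text \<open>Hansel's argument around a fixed pair \<open>x \<noteq> y\<close>: in a coordinate where \<open>x\<close> and \<open>y\<close>
  differ, the other codewords are counted only where they avoid both symbols, and any
  \<open>k - 2\<close> of them must be separated there by \<open>k - 2\<close> of the remaining \<open>b - 2\<close> symbols.\<close>
lemma hash_code_pair_bound:
  assumes hc: "is_hash_code b k n C" and k: "4 \<le> k" "k \<le> b" and S: "S \<subseteq> C"
    and xy: "x \<in> S" "y \<in> S" "x \<noteq> y"
  shows "ln (real (card S))
           \<le> ln (real k - 1) + sep_weight n S x y / real (card S) * ln ((real b - 2) / (real k - 3))"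
proof -
  define I where "I = {i. i < n \<and> x ! i \<noteq> y ! i}"
  define Col where "Col i = {1..b} - {x ! i, y ! i}" for i
  define r where "r = real (k - 3) / real (b - 2)"
  define e where "e u = card {i\<in>I. u ! i \<in> Col i}" for u
  have SW: "S \<subseteq> words b n" using S hash_code_subset_words[OF hc] by blast
  have finS: "finite S" using SW finite_words by (rule finite_subset)
  have Col: "finite (Col i) \<and> card (Col i) = b - 2" if "i \<in> I" for i
  proof -
    have "{x ! i, y ! i} \<subseteq> {1..b}" "card {x ! i, y ! i} = 2"
      using that words_nth[of x b n i] words_nth[of y b n i] xy SW unfolding I_def by auto
    thus ?thesis unfolding Col_def by (simp add: card_Diff_subset)
  qed
  have "(\<Sum>u\<in>S. r ^ e u) \<le> real (k - 3) + real (card {x, y})"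
    unfolding r_def e_def
  proof (rule hansel_weighted_count[OF finS _ _ Col])
    show "finite {x, y}" "finite I" unfolding I_def by simp_all
    show "1 \<le> k - 3" "k - 3 \<le> b - 2" using k by simp_all
  next
    fix T assume "T \<subseteq> S - {x, y}" "card T = k - 3 + 1"
    moreover have "k - 3 + 1 = k - 2" "2 \<le> k" using k by auto
    ultimately show "\<exists>i\<in>I. (\<forall>u\<in>T. u ! i \<in> Col i) \<and> inj_on (\<lambda>u. u ! i) T"
      using hash_code_separates[OF hc _ S xy, of T] unfolding I_def Col_def by simp
  qed
  also have "\<dots> = real k - 1" using xy(3) k by (simp add: of_nat_diff)
  finally have "(\<Sum>u\<in>S. r ^ e u) \<le> real k - 1" .
  moreover have "S \<noteq> {}" "0 < r" using xy(1) k unfolding r_def by auto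
  ultimately have "ln (real (card S)) \<le> ln (real k - 1) - (\<Sum>u\<in>S. real (e u)) / real (card S) * ln r"
    using ln_card_le_of_sum_power_le[OF finS] by blast
  moreover have "(\<Sum>u\<in>S. real (e u)) = sep_weight n S x y"
  proof -
    have "{i\<in>I. u ! i \<in> Col i} = {i. i < n \<and> x ! i \<noteq> y ! i \<and> u ! i \<noteq> x ! i \<and> u ! i \<noteq> y ! i}"
      if "u \<in> S" for u
      using that words_nth[of u b n] SW unfolding I_def Col_def by auto
    thus ?thesis unfolding e_def sep_weight_eq_sum_card[OF finS] by simp
  qed
  moreover have "ln ((real b - 2) / (real k - 3)) = - ln r"
    unfolding r_def using k by (simp add: ln_div of_nat_diff)
  ultimately show ?thesis by (simp add: algebra_simps)
qed

lemma fibre_large_part_eq: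
  assumes x: "x \<in> C" "L \<le> card (fibre f C x)"
  shows "fibre f {y\<in>C. L \<le> card (fibre f C y)} x = fibre f C x"
proof (intro equalityI subsetI)
  fix y assume "y \<in> fibre f {y\<in>C. L \<le> card (fibre f C y)} x"
  thus "y \<in> fibre f C x" unfolding fibre_def by simp
next
  fix y assume y: "y \<in> fibre f C x"
  hence "fibre f C y = fibre f C x" by (rule fibre_eq)
  thus "y \<in> fibre f {y\<in>C. L \<le> card (fibre f C y)} x" using x y unfolding fibre_def by simp
qed

lemma ln_card_large_fibres_le:
  assumes hc: "is_hash_code b k n C" and k: "4 \<le> k" "k \<le> b" and L: "2 \<le> L" and l: "l \<le> n"
    and S_def: "S = {x\<in>C. L \<le> card (fibre (take l) C x)}" and ne: "S \<noteq> {}"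
  shows "ln (real (card S)) \<le> ln (real k - 1)
           + real L / (real L - 1) * kappa b * ln ((real b - 2) / (real k - 3)) * (real n - real l)"
proof -
  define m where "m = real (card S)"
  define T where "T = (real n - real l) * kappa b * m^2"
  have SC: "S \<subseteq> C" unfolding S_def by blast
  have SW: "S \<subseteq> words b n" using hash_code_subset_words[OF hc] SC by blast
  have finS: "finite S" using SW finite_words by (rule finite_subset)
  have m: "0 < m" unfolding m_def using finS ne by (simp add: card_gt_0_iff)
  have large: "L \<le> card (fibre (take l) S x)" if "x \<in> S" for x
    using that fibre_large_part_eq[of x C L "take l"] unfolding S_def by simp
  have mean: "(\<Sum>x\<in>S. fibre_mean (take l) S (sep_weight n S) x) \<le> T"
    using sum_fibre_mean_sep_weight_le[OF SW _ l] k unfolding T_def m_def by simp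
  have T: "0 \<le> T" unfolding T_def using l k kappa_pos[of b] by simp
  obtain x y where xy: "x \<in> S" "y \<in> fibre (take l) S x" "x \<noteq> y"
    and close: "sep_weight n S x y \<le> real L / (real L - 1) * T / real (card S)"
    by (rule obtain_close_pair_in_fibre[where W = "sep_weight n S", OF finS ne L large
          sep_weight_self mean T])
  have "y \<in> S" using fibre_subset xy(2) by (rule subsetD)
  have "1 \<le> (real b - 2) / (real k - 3)" using k by simp
  hence c: "0 \<le> ln ((real b - 2) / (real k - 3))" by simp
  have "ln m \<le> ln (real k - 1) + sep_weight n S x y / m * ln ((real b - 2) / (real k - 3))"
    using hash_code_pair_bound[OF hc k SC xy(1) \<open>y \<in> S\<close> xy(3)] unfolding m_def .
  also have "\<dots> \<le> ln (real k - 1) + real L / (real L - 1) * T / m / m * ln ((real b - 2) / (real k - 3))"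
  proof -
    have "sep_weight n S x y / m \<le> real L / (real L - 1) * T / m / m"
      unfolding m_def by (rule divide_right_mono[OF close]) simp
    from mult_right_mono[OF this c] show ?thesis by simp
  qed
  also have "real L / (real L - 1) * T / m / m
      = real L / (real L - 1) * kappa b * (real n - real l)"
    unfolding T_def using m by (simp add: power2_eq_square)
  finally show ?thesis unfolding m_def by (simp add: ac_simps)
qed

lemma card_small_fibres_le:
  assumes "finite C"
  shows "card {x\<in>C. card (fibre f C x) < L} \<le> (L - 1) * card (f ` C)"
proof -
  define Sm where "Sm = {x\<in>C. card (fibre f C x) < L}"
  have "finite Sm" using assms unfolding Sm_def by simp
  have "Sm = (\<Union>p\<in>f ` Sm. {x\<in>Sm. f x = p})" by auto
  hence "card Sm \<le> (\<Sum>p\<in>f ` Sm. card {x\<in>Sm. f x = p})"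
    using card_UN_le[OF finite_imageI[OF \<open>finite Sm\<close>]] by metis
  also have "\<dots> \<le> (\<Sum>p\<in>f ` Sm. L - 1)"
  proof (intro sum_mono)
    fix p assume "p \<in> f ` Sm"
    then obtain x where x: "x \<in> Sm" "p = f x" by auto
    have "card {x\<in>Sm. f x = p} \<le> card (fibre f C x)"
      using assms x unfolding fibre_def Sm_def by (intro card_mono) auto
    thus "card {x\<in>Sm. f x = p} \<le> L - 1" using x(1) unfolding Sm_def by auto
  qed
  also have "\<dots> \<le> (L - 1) * card (f ` C)"
    using assms unfolding Sm_def by (simp add: card_mono image_mono)
  finally show ?thesis unfolding Sm_def .
qed

lemma card_le_twice_large_fibres:
  assumes C: "C \<subseteq> words b n" and l: "l \<le> n" and M: "2 * L * b ^ l \<le> card C"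
  shows "card C \<le> 2 * card {x\<in>C. L \<le> card (fibre (take l) C x)}"
proof -
  have finC: "finite C" using C finite_words by (rule finite_subset)
  have "take l ` C \<subseteq> words b l" using C l take_in_words by blast
  hence "card (take l ` C) \<le> b ^ l" using card_mono[OF finite_words] card_words by metis
  hence "card {x\<in>C. card (fibre (take l) C x) < L} \<le> (L - 1) * b ^ l"
    using card_small_fibres_le[OF finC, of "take l" L] by (meson le_trans mult_le_mono2)
  moreover have "card C = card {x\<in>C. L \<le> card (fibre (take l) C x)} + card {x\<in>C. card (fibre (take l) C x) < L}"
    using finC by (subst card_Un_disjoint[symmetric]) (auto intro: arg_cong[where f = card])
  ultimately show ?thesis using M by (simp add: algebra_simps diff_mult_distrib)
qed

lemma obtain_prefix_length:
  fixes b L M :: nat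
  assumes b: "2 \<le> b" and L: "0 < L" and M: "2 * L \<le> M"
  obtains l where "2 * L * b ^ l \<le> M" and "ln (real M) < ln (2 * real L) + (real l + 1) * ln (real b)"
proof -
  have "1 \<le> M div (2 * L)" using L M by (simp add: less_eq_div_iff_mult_less_eq)
  then obtain l where l: "b ^ l \<le> M div (2 * L)" "M div (2 * L) < b ^ (l + 1)"
    using ex_power_ivl1[of b "M div (2 * L)"] b by auto
  have "2 * L * b ^ l \<le> M" using l(1) L by (simp add: less_eq_div_iff_mult_less_eq mult.commute)
  moreover have "M < 2 * L * b ^ (l + 1)" using l(2) L by (simp add: div_less_iff_less_mult mult.commute)
  hence "real M < 2 * real L * real b ^ (l + 1)"
    by (metis of_nat_less_iff of_nat_mult of_nat_power of_nat_numeral)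
  hence "ln (real M) < ln (2 * real L) + (real l + 1) * ln (real b)"
    using L M b by (simp add: ln_mult ln_realpow distrib_right flip: ln_less_cancel_iff)
  ultimately show ?thesis using that by blast
qed

text \<open>At least half of the codewords lie in prefix classes of size at least \<open>L\<close>.\<close>
lemma ln_card_hash_code_le_prefix:
  assumes hc: "is_hash_code b k n C" and k: "4 \<le> k" "k \<le> b" and L: "2 \<le> L"
    and lower: "2 * L * b ^ l \<le> card C"
  shows "ln (real (card C)) \<le> ln 2 + ln (real k - 1)
           + real L / (real L - 1) * kappa b * ln ((real b - 2) / (real k - 3)) * (real n - real l)"
proof -
  define S where "S = {x\<in>C. L \<le> card (fibre (take l) C x)}"
  have CW: "C \<subseteq> words b n" using hc by (rule hash_code_subset_words)
  have "card C \<le> b ^ n" using card_mono[OF finite_words CW] card_words[of b n] by simp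
  moreover have "b ^ l \<le> 2 * L * b ^ l" using L by simp
  ultimately have "b ^ l \<le> b ^ n" using lower by linarith
  hence l: "l \<le> n" using k by (simp add: power_le_imp_le_exp)
  have CS: "card C \<le> 2 * card S"
    using card_le_twice_large_fibres[OF CW l] lower unfolding S_def by simp
  have "0 < 2 * L * b ^ l" using L k by simp
  hence C: "0 < real (card C)" using lower by linarith
  hence "S \<noteq> {}" using CS by auto
  have "real (card C) \<le> 2 * real (card S)" using CS by (metis of_nat_le_iff of_nat_mult of_nat_numeral)
  hence "ln (real (card C)) \<le> ln (2 * real (card S))" using C by simp
  also have "\<dots> = ln 2 + ln (real (card S))" using C CS by (simp add: ln_mult)
  finally show ?thesis
    using ln_card_large_fibres_le[OF hc k L l S_def \<open>S \<noteq> {}\<close>] by simp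
qed

text \<open>The prefix length is chosen as \<open>l \<approx> log b (|C| / 2 L)\<close>.\<close>
lemma ln_card_hash_code_le:
  assumes hc: "is_hash_code b k n C" and k: "4 \<le> k" "k \<le> b" and L: "2 \<le> L"
  defines "A \<equiv> real L / (real L - 1) * kappa b * ln ((real b - 2) / (real k - 3))"
  shows "ln (real (card C)) * (1 + A / ln (real b))
           \<le> A * real n + ln (2 * real L) + ln (real k - 1) + A * ln (2 * real L) / ln (real b) + A"
proof -
  define M where "M = card C"
  have b: "4 \<le> b" using k by simp
  have lnb: "0 < ln (real b)" using b by simp
  have "1 \<le> (real b - 2) / (real k - 3)" using k by simp
  hence A: "0 \<le> A" unfolding A_def using L kappa_pos[of b] b by simp
  have lnk: "0 \<le> ln (real k - 1)" using k by simp
  have lnL: "ln 2 \<le> ln (2 * real L)" using L by simp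
  have expand: "ln (real M) * (1 + A / ln (real b)) = ln (real M) + A * ln (real M) / ln (real b)"
    by (simp add: algebra_simps)
  show ?thesis
  proof (cases "M < 2 * L")
    case True
    hence "ln (real M) \<le> ln (2 * real L)"
      using lnL by (cases "M = 0") (simp_all add: of_nat_less_iff[symmetric])
    hence "A * ln (real M) / ln (real b) \<le> A * ln (2 * real L) / ln (real b)"
      using A lnb by (simp add: divide_right_mono mult_left_mono)
    thus ?thesis using \<open>ln (real M) \<le> _\<close> expand A lnk mult_nonneg_nonneg[OF A, of "real n"]
      unfolding M_def by linarith
  next
    case False
    then obtain l where lower: "2 * L * b ^ l \<le> M"
      and upper: "ln (real M) < ln (2 * real L) + (real l + 1) * ln (real b)"
      using obtain_prefix_length[of b L M] b L by auto
    have "ln (real M) \<le> ln 2 + ln (real k - 1) + A * real n - A * real l"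
      using ln_card_hash_code_le_prefix[OF hc k L lower[unfolded M_def]]
      unfolding M_def A_def[symmetric] by (simp add: right_diff_distrib)
    moreover have "A * ln (real M) / ln (real b) - A * ln (2 * real L) / ln (real b) - A \<le> A * real l"
    proof -
      have "(ln (real M) - ln (2 * real L)) / ln (real b) - 1 \<le> real l"
        using upper lnb by (simp add: field_simps)
      from mult_left_mono[OF this A] show ?thesis by (simp add: algebra_simps diff_divide_distrib)
    qed
    ultimately show ?thesis using expand lnL unfolding M_def by argo
  qed
qed

section \<open>The rate bound\<close>

lemma limsup_log_div_le:
  fixes f :: "nat \<Rightarrow> nat"
  assumes bound: "\<And>n. ln (real (f n)) \<le> a * real n + K"
  shows "limsup (\<lambda>n. ereal (log 2 (real (f n)) / real n)) \<le> ereal (a / ln 2)"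
proof -
  have "\<forall>\<^sub>F n in sequentially. ereal (log 2 (real (f n)) / real n) \<le> ereal (a / ln 2 + K / ln 2 / real n)"
    using eventually_gt_at_top[of "0::nat"]
  proof eventually_elim
    case (elim n)
    have "log 2 (real (f n)) / real n = ln (real (f n)) / ln 2 / real n" by (simp add: log_def)
    also have "\<dots> \<le> (a * real n + K) / ln 2 / real n"
      using bound[of n] by (simp add: divide_right_mono)
    also have "\<dots> = a / ln 2 + K / ln 2 / real n" using elim by (simp add: field_simps)
    finally show ?case by simp
  qed
  hence "limsup (\<lambda>n. ereal (log 2 (real (f n)) / real n)) \<le> limsup (\<lambda>n. ereal (a / ln 2 + K / ln 2 / real n))"
    by (rule Limsup_mono)
  also have "\<dots> = ereal (a / ln 2)"
  proof (rule lim_imp_Limsup)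
    have "(\<lambda>n. a / ln 2 + K / ln 2 / real n) \<longlonglongrightarrow> a / ln 2 + 0"
      by (intro tendsto_add tendsto_const lim_const_over_n)
    thus "(\<lambda>n. ereal (a / ln 2 + K / ln 2 / real n)) \<longlonglongrightarrow> ereal (a / ln 2)"
      by (intro tendsto_ereal) simp
  qed simp
  finally show ?thesis .
qed

lemma obtain_optimal_hash_code:
  assumes "0 < k"
  obtains C where "is_hash_code b k n C" and "card C = N_hash b k n"
proof -
  have "{C. is_hash_code b k n C} \<subseteq> Pow (words b n)" unfolding is_hash_code_def by auto
  hence "finite {C. is_hash_code b k n C}" using finite_words by (rule finite_subset[OF _ finite_Pow_iff[THEN iffD2]])
  moreover have "is_hash_code b k n {}" unfolding is_hash_code_def using assms by auto
  ultimately have "N_hash b k n \<in> card ` {C. is_hash_code b k n C}"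
    unfolding N_hash_def by (intro Max_in) auto
  thus ?thesis using that by auto
qed

lemma R_hash_le_for_fibre_size:
  assumes k: "4 \<le> k" "k \<le> b" and L: "2 \<le> L"
  shows "R_hash b k \<le> ereal (inverse (1 / log 2 (real b)
           + (1 - 1 / real L) / (kappa b * log 2 ((real b - 2) / (real k - 3)))))"
proof -
  define A where "A = real L / (real L - 1) * kappa b * ln ((real b - 2) / (real k - 3))"
  define K where "K = ln (2 * real L) + ln (real k - 1) + A * ln (2 * real L) / ln (real b) + A"
  have lnb: "0 < ln (real b)" using k by simp
  have "1 < (real b - 2) / (real k - 3)" using k by simp
  hence A: "0 < A" unfolding A_def using L kappa_pos[of b] k by simp
  have P: "0 < 1 + A / ln (real b)" using A lnb by (simp add: add_pos_pos)
  have "ln (real (N_hash b k n)) \<le> A / (1 + A / ln (real b)) * real n + K / (1 + A / ln (real b))" for n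
  proof -
    obtain C where hc: "is_hash_code b k n C" and C: "card C = N_hash b k n"
      using obtain_optimal_hash_code[of k] k by auto
    have "ln (real (N_hash b k n)) * (1 + A / ln (real b)) \<le> A * real n + K"
      using ln_card_hash_code_le[OF hc k L] unfolding C A_def[symmetric] K_def by (simp add: add.assoc)
    hence "ln (real (N_hash b k n)) \<le> (A * real n + K) / (1 + A / ln (real b))"
      using P by (simp add: pos_le_divide_eq)
    thus ?thesis by (simp add: add_divide_distrib)
  qed
  hence "R_hash b k \<le> ereal (A / (1 + A / ln (real b)) / ln 2)"
    unfolding R_hash_def by (rule limsup_log_div_le)
  also have "A / (1 + A / ln (real b)) / ln 2 = inverse (1 / log 2 (real b)
           + (1 - 1 / real L) / (kappa b * log 2 ((real b - 2) / (real k - 3))))"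
  proof -
    have "(1 - 1 / real L) / (kappa b * log 2 ((real b - 2) / (real k - 3))) = ln 2 / A"
      using L unfolding A_def log_def by (simp add: field_simps)
    moreover have "1 / log 2 (real b) = ln 2 / ln (real b)" by (simp add: log_def)
    ultimately show ?thesis using A lnb by (simp only:) (simp add: field_simps)
  qed
  finally show ?thesis .
qed

theorem mainTheorem1:
  fixes b k :: nat
  assumes "4 \<le> k" and "k \<le> b"
  shows "R_hash b k \<le> ereal (inverse (1 / log 2 (real b)
           + (real b)^2 / (((real b)^2 - 3 * real b + 2) * log 2 ((real b - 2) / (real k - 3)))))"
proof -
  define d where "d = kappa b * log 2 ((real b - 2) / (real k - 3))"
  define g where "g L = inverse (1 / log 2 (real b) + (1 - 1 / real L) / d)" for L :: nat
  have "1 < (real b - 2) / (real k - 3)" using assms by simp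
  hence d: "0 < d" unfolding d_def using assms kappa_pos[of b] by simp
  have "0 < 1 / log 2 (real b) + (1 - 0) / d" using assms d by (intro add_pos_pos) simp_all
  hence "(\<lambda>L. ereal (g L)) \<longlonglongrightarrow> ereal (inverse (1 / log 2 (real b) + (1 - 0) / d))"
    unfolding g_def using d by (intro tendsto_intros lim_const_over_n) auto
  moreover have "\<forall>\<^sub>F L in sequentially. R_hash b k \<le> ereal (g L)"
    using eventually_ge_at_top[of 2] R_hash_le_for_fibre_size[OF assms] unfolding g_def d_def
    by (rule eventually_mono)
  ultimately have "R_hash b k \<le> ereal (inverse (1 / log 2 (real b) + 1 / d))"
    using tendsto_lowerbound by fastforce
  moreover have "1 / d = (real b)^2 / (((real b)^2 - 3 * real b + 2) * log 2 ((real b - 2) / (real k - 3)))"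
    unfolding d_def kappa_def by simp
  ultimately show ?thesis by simp
qed

end
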